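(* Under the Rician noise model below, let $\widehat D_{NL}$ be the nonlinear least squares estimator $\widehat D_{NL}=\arg\min_{D\in\mathbb R^6}\sum_{b\in\mathcal B}(S_b-S_0\exp(-x_b^TD))^2$. Then as $\sigma\to0$, $$\widehat D_{NL}=D^0+\sigma D_{1,NL}+\sigma^2D_{2,NL}+O_P(\sigma^3),$$ where, writing $M=\sum_{b\in\mathcal B}\overline S_b^2x_bx_b^T$, $$D_{1,NL}=-M^{-1}\sum_{b\in\mathcal B}\overline S_b(u_b^T\varepsilon_b)x_b,$$ $$D_{2,NL}=M^{-1}\Big[\sum_{b\in\mathcal B}\overline S_b^2(x_b^TD_{1,NL})^2x_b+\frac12\sum_{b\in\mathcal B}(\overline S_bx_b^TD_{1,NL}+u_b^T\varepsilon_b)^2x_b-\frac12\sum_{b\in\mathcal B}\|\varepsilon_b\|^2x_b\Big].$$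
   Context: Rician noise model: $S_0>0$ is a known constant; $\mathcal B$ is a finite set of unit vectors $b=(b_1,b_2,b_3)^T\in\mathbb R^3$; a symmetric $3\times3$ matrix $D$ is identified with $(D_{11},D_{22},D_{33},D_{12},D_{13},D_{23})^T\in\mathbb R^6$, and $x_b=(b_1^2,b_2^2,b_3^2,2b_1b_2,2b_1b_3,2b_2b_3)^T$, so $b^TDb=x_b^TD$. It is assumed that $\sum_{b\in\mathcal B}x_bx_b^T$ is invertible. $D^0$ is the true tensor and $\overline S_b=S_0\exp(-x_b^TD^0)$. For each $b$, $u_b\in\mathbb R^2$ is a unit vector. The $\varepsilon_b$, $b\in\mathcal B$, are independent $N(0,I_2)$ random vectors, $\sigma>0$, and $S_b=\|\overline S_bu_b+\sigma\varepsilon_b\|$. Asymptotics are as $\sigma\to0$ with $S_0,D^0,\mathcal B,(u_b)$ fixed; $O_P(\sigma^3)$ denotes a random vector $R_\sigma$ with $R_\sigma/\sigma^3$ bounded in probability. *)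

theory Defs
  imports "HOL-Probability.Probability"
begin

text \<open>Identification of a symmetric 3x3 matrix D with
  (D11,D22,D33,D12,D13,D23) in R^6, and the design vector x_b.\<close>
definition xvec :: "real^3 \<Rightarrow> real^6" where
  "xvec b = vector [(b$1)^2, (b$2)^2, (b$3)^2, 2*b$1*b$2, 2*b$1*b$3, 2*b$2*b$3]"

definition outer_prod :: "real^6 \<Rightarrow> real^6 \<Rightarrow> real^6^6" where
  "outer_prod x y = (\<chi> i j. x$i * y$j)"

definition Sbar :: "real \<Rightarrow> real^6 \<Rightarrow> real^3 \<Rightarrow> real" where
  "Sbar S0 D0 b = S0 * exp (- (xvec b \<bullet> D0))"

definition Sobs :: "real \<Rightarrow> real^6 \<Rightarrow> (real^3 \<Rightarrow> real^2) \<Rightarrow> real \<Rightarrow> (real^3 \<Rightarrow> real^2) \<Rightarrow> real^3 \<Rightarrow> real" where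
  "Sobs S0 D0 u \<sigma> e b = norm (Sbar S0 D0 b *\<^sub>R u b + \<sigma> *\<^sub>R e b)"

definition NLobj :: "(real^3) set \<Rightarrow> real \<Rightarrow> real^6 \<Rightarrow> (real^3 \<Rightarrow> real^2) \<Rightarrow> real \<Rightarrow> (real^3 \<Rightarrow> real^2) \<Rightarrow> real^6 \<Rightarrow> real" where
  "NLobj B S0 D0 u \<sigma> e D = (\<Sum>b\<in>B. (Sobs S0 D0 u \<sigma> e b - S0 * exp (- (xvec b \<bullet> D)))^2)"

definition Mmat :: "(real^3) set \<Rightarrow> real \<Rightarrow> real^6 \<Rightarrow> real^6^6" where
  "Mmat B S0 D0 = (\<Sum>b\<in>B. (Sbar S0 D0 b)^2 *\<^sub>R outer_prod (xvec b) (xvec b))"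

definition D1NL :: "(real^3) set \<Rightarrow> real \<Rightarrow> real^6 \<Rightarrow> (real^3 \<Rightarrow> real^2) \<Rightarrow> (real^3 \<Rightarrow> real^2) \<Rightarrow> real^6" where
  "D1NL B S0 D0 u e =
     - (matrix_inv (Mmat B S0 D0) *v (\<Sum>b\<in>B. (Sbar S0 D0 b * (u b \<bullet> e b)) *\<^sub>R xvec b))"

definition D2NL :: "(real^3) set \<Rightarrow> real \<Rightarrow> real^6 \<Rightarrow> (real^3 \<Rightarrow> real^2) \<Rightarrow> (real^3 \<Rightarrow> real^2) \<Rightarrow> real^6" where
  "D2NL B S0 D0 u e =
     (let D1 = D1NL B S0 D0 u e in
      matrix_inv (Mmat B S0 D0) *v
        ((\<Sum>b\<in>B. ((Sbar S0 D0 b)^2 * (xvec b \<bullet> D1)^2) *\<^sub>R xvec b)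
         + (1/2) *\<^sub>R (\<Sum>b\<in>B. (Sbar S0 D0 b * (xvec b \<bullet> D1) + u b \<bullet> e b)^2 *\<^sub>R xvec b)
         - (1/2) *\<^sub>R (\<Sum>b\<in>B. (norm (e b))^2 *\<^sub>R xvec b)))"

text \<open>X_sigma is bounded in probability as sigma -> 0+ (formulated with inner
  probability, so no measurability of X is required): for every e > 0 there is K
  such that for all sufficiently small sigma > 0 there is an event of probability
  at least 1 - e on which norm (X sigma) <= K.\<close>
definition bounded_in_prob_at0 :: "'a measure \<Rightarrow> (real \<Rightarrow> 'a \<Rightarrow> 'b::real_normed_vector) \<Rightarrow> bool" where
  "bounded_in_prob_at0 M X \<longleftrightarrow>
     (\<forall>e>0. \<exists>K. \<forall>\<^sub>F \<sigma> in at_right 0.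
        \<exists>A\<in>sets M. measure M A \<ge> 1 - e \<and> (\<forall>\<omega>\<in>A. norm (X \<sigma> \<omega>) \<le> K))"

end

theory Submission
  imports Defs
begin

(*
  The statement is probabilistic, but its content is deterministic.  Fix K > 0 and
  consider noise realisations with norm (eps_b) <= K for all b.  Uniformly over such
  realisations we show  Dhat - D0 - sigma D1 - sigma^2 D2 = O(sigma^3)  as sigma -> 0+.
  Since finitely many random vectors are jointly tight, the event {all norm (eps_b) <= K}
  has probability >= 1 - e for K large, which gives boundedness in probability.
*)

section \<open>Bounds of order $\sigma^k$, uniform on a set of realisations\<close>

definition uniform_O :: "'w set \<Rightarrow> (real \<Rightarrow> 'w \<Rightarrow> 'v::real_normed_vector) \<Rightarrow> nat \<Rightarrow> bool" where
  "uniform_O W f k \<longleftrightarrow> (\<exists>C. \<forall>\<^sub>F \<sigma> in at_right 0. \<forall>\<omega>\<in>W. norm (f \<sigma> \<omega>) \<le> C * \<sigma>^k)"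

lemma eventually_at_right_below: "(c::real) > 0 \<Longrightarrow> \<forall>\<^sub>F \<sigma> in at_right 0. 0 < \<sigma> \<and> \<sigma> < c"
  unfolding eventually_at_right[of 0] by (intro exI[of _ c]) auto

lemma uniform_OI: "(\<forall>\<^sub>F \<sigma> in at_right 0. \<forall>\<omega>\<in>W. norm (f \<sigma> \<omega>) \<le> C * \<sigma>^k) \<Longrightarrow> uniform_O W f k"
  unfolding uniform_O_def by blast

lemma uniform_O_cong:
  assumes "uniform_O W f k" "\<forall>\<^sub>F \<sigma> in at_right 0. \<forall>\<omega>\<in>W. f \<sigma> \<omega> = g \<sigma> \<omega>"
  shows "uniform_O W g k"
proof -
  obtain C where "\<forall>\<^sub>F \<sigma> in at_right 0. \<forall>\<omega>\<in>W. norm (f \<sigma> \<omega>) \<le> C * \<sigma>^k"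
    using assms(1) uniform_O_def by blast
  with assms(2) have "\<forall>\<^sub>F \<sigma> in at_right 0. \<forall>\<omega>\<in>W. norm (g \<sigma> \<omega>) \<le> C * \<sigma>^k"
    by eventually_elim auto
  thus ?thesis by (rule uniform_OI)
qed

lemma uniform_O_eq:
  "uniform_O W f k \<Longrightarrow> (\<And>\<sigma> \<omega>. \<sigma> > 0 \<Longrightarrow> \<omega> \<in> W \<Longrightarrow> f \<sigma> \<omega> = g \<sigma> \<omega>) \<Longrightarrow> uniform_O W g k"
  by (erule uniform_O_cong) (use eventually_at_right_less[of 0] in \<open>eventually_elim, auto\<close>)

lemma uniform_O_add:
  assumes "uniform_O W f k" "uniform_O W g k"
  shows "uniform_O W (\<lambda>\<sigma> \<omega>. f \<sigma> \<omega> + g \<sigma> \<omega>) k"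
proof -
  obtain C where C: "\<forall>\<^sub>F \<sigma> in at_right 0. \<forall>\<omega>\<in>W. norm (f \<sigma> \<omega>) \<le> C * \<sigma>^k"
    using assms(1) uniform_O_def by blast
  obtain D where D: "\<forall>\<^sub>F \<sigma> in at_right 0. \<forall>\<omega>\<in>W. norm (g \<sigma> \<omega>) \<le> D * \<sigma>^k"
    using assms(2) uniform_O_def by blast
  from C D have "\<forall>\<^sub>F \<sigma> in at_right 0. \<forall>\<omega>\<in>W. norm (f \<sigma> \<omega> + g \<sigma> \<omega>) \<le> (C + D) * \<sigma>^k"
  proof eventually_elim
    case (elim \<sigma>)
    show ?case
    proof
      fix \<omega> assume "\<omega> \<in> W"
      hence "norm (f \<sigma> \<omega>) + norm (g \<sigma> \<omega>) \<le> (C + D) * \<sigma>^k"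
        using elim by (auto simp: distrib_right intro!: add_mono)
      thus "norm (f \<sigma> \<omega> + g \<sigma> \<omega>) \<le> (C + D) * \<sigma>^k"
        by (rule order_trans[OF norm_triangle_ineq])
    qed
  qed
  thus ?thesis by (rule uniform_OI)
qed

lemma uniform_O_mono:
  assumes "uniform_O W f k" "j \<le> k"
  shows "uniform_O W f j"
proof -
  obtain C where C: "\<forall>\<^sub>F \<sigma> in at_right 0. \<forall>\<omega>\<in>W. norm (f \<sigma> \<omega>) \<le> C * \<sigma>^k"
    using assms(1) uniform_O_def by blast
  from C eventually_at_right_below[OF zero_less_one]
  have "\<forall>\<^sub>F \<sigma> in at_right 0. \<forall>\<omega>\<in>W. norm (f \<sigma> \<omega>) \<le> \<bar>C\<bar> * \<sigma>^j"
  proof eventually_elim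
    case (elim \<sigma>)
    have "C * \<sigma>^k \<le> \<bar>C\<bar> * \<sigma>^j"
      using elim assms(2) by (intro mult_mono power_decreasing) auto
    thus ?case using elim by (auto intro: order_trans)
  qed
  thus ?thesis by (rule uniform_OI)
qed

lemma uniform_O_scaleR:
  fixes f :: "real \<Rightarrow> 'w \<Rightarrow> real" and g :: "real \<Rightarrow> 'w \<Rightarrow> 'v::real_normed_vector"
  assumes "uniform_O W f i" "uniform_O W g j" "k \<le> i + j"
  shows "uniform_O W (\<lambda>\<sigma> \<omega>. f \<sigma> \<omega> *\<^sub>R g \<sigma> \<omega>) k"
proof -
  obtain C where C: "\<forall>\<^sub>F \<sigma> in at_right 0. \<forall>\<omega>\<in>W. norm (f \<sigma> \<omega>) \<le> C * \<sigma>^i"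
    using assms(1) uniform_O_def by blast
  obtain D where D: "\<forall>\<^sub>F \<sigma> in at_right 0. \<forall>\<omega>\<in>W. norm (g \<sigma> \<omega>) \<le> D * \<sigma>^j"
    using assms(2) uniform_O_def by blast
  from C D have "\<forall>\<^sub>F \<sigma> in at_right 0. \<forall>\<omega>\<in>W. norm (f \<sigma> \<omega> *\<^sub>R g \<sigma> \<omega>) \<le> (C * D) * \<sigma>^(i+j)"
  proof eventually_elim
    case (elim \<sigma>)
    show ?case
    proof
      fix \<omega> assume w: "\<omega> \<in> W"
      have "norm (f \<sigma> \<omega> *\<^sub>R g \<sigma> \<omega>) = norm (f \<sigma> \<omega>) * norm (g \<sigma> \<omega>)" by simp
      also have "\<dots> \<le> (C * \<sigma>^i) * (D * \<sigma>^j)"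
        using elim w norm_ge_zero[of "g \<sigma> \<omega>"] by (intro mult_mono) (auto intro: order_trans)
      also have "\<dots> = (C * D) * \<sigma>^(i+j)" by (simp add: power_add algebra_simps)
      finally show "norm (f \<sigma> \<omega> *\<^sub>R g \<sigma> \<omega>) \<le> (C * D) * \<sigma>^(i+j)" .
    qed
  qed
  hence "uniform_O W (\<lambda>\<sigma> \<omega>. f \<sigma> \<omega> *\<^sub>R g \<sigma> \<omega>) (i + j)" by (rule uniform_OI)
  thus ?thesis using assms(3) by (rule uniform_O_mono)
qed

lemma uniform_O_times:
  "uniform_O W f i \<Longrightarrow> uniform_O W g j \<Longrightarrow> k \<le> i + j \<Longrightarrow> uniform_O W (\<lambda>\<sigma> \<omega>. (f \<sigma> \<omega> :: real) * g \<sigma> \<omega>) k"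
  using uniform_O_scaleR[of W f i g j k] by simp

lemma uniform_O_linear:
  assumes "bounded_linear L" "uniform_O W f k"
  shows "uniform_O W (\<lambda>\<sigma> \<omega>. L (f \<sigma> \<omega>)) k"
proof -
  obtain C where C: "\<forall>\<^sub>F \<sigma> in at_right 0. \<forall>\<omega>\<in>W. norm (f \<sigma> \<omega>) \<le> C * \<sigma>^k"
    using assms(2) uniform_O_def by blast
  obtain K where K: "K > 0" "\<And>x. norm (L x) \<le> norm x * K"
    using bounded_linear.pos_bounded[OF assms(1)] by blast
  from C have "\<forall>\<^sub>F \<sigma> in at_right 0. \<forall>\<omega>\<in>W. norm (L (f \<sigma> \<omega>)) \<le> (K * C) * \<sigma>^k"
  proof eventually_elim
    case (elim \<sigma>)
    show ?case
    proof
      fix \<omega> assume w: "\<omega> \<in> W"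
      have "norm (L (f \<sigma> \<omega>)) \<le> norm (f \<sigma> \<omega>) * K" by (rule K)
      also have "\<dots> \<le> (C * \<sigma>^k) * K" using elim w K by (intro mult_right_mono) auto
      finally show "norm (L (f \<sigma> \<omega>)) \<le> (K * C) * \<sigma>^k" by (simp add: algebra_simps)
    qed
  qed
  thus ?thesis by (rule uniform_OI)
qed

lemma uniform_O_scale: "uniform_O W f k \<Longrightarrow> uniform_O W (\<lambda>\<sigma> \<omega>. c *\<^sub>R f \<sigma> \<omega>) k"
  using uniform_O_linear[of "\<lambda>x. c *\<^sub>R x" W f k] bounded_linear_scaleR_right by blast

lemma uniform_O_neg: "uniform_O W f k \<Longrightarrow> uniform_O W (\<lambda>\<sigma> \<omega>. - f \<sigma> \<omega>) k"
  using uniform_O_scale[of W f k "-1"] by simp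

lemma uniform_O_diff:
  "uniform_O W f k \<Longrightarrow> uniform_O W g k \<Longrightarrow> uniform_O W (\<lambda>\<sigma> \<omega>. f \<sigma> \<omega> - g \<sigma> \<omega>) k"
  using uniform_O_add[OF _ uniform_O_neg[of W g k], of f] by simp

lemma uniform_O_const: "(\<forall>\<omega>\<in>W. norm (f \<omega>) \<le> K) \<Longrightarrow> uniform_O W (\<lambda>\<sigma> \<omega>. f \<omega>) 0"
  by (rule uniform_OI[of _ _ K]) auto

lemma uniform_O_sum:
  assumes "finite B" "\<And>b. b \<in> B \<Longrightarrow> uniform_O W (f b) k"
  shows "uniform_O W (\<lambda>\<sigma> \<omega>. \<Sum>b\<in>B. f b \<sigma> \<omega>) k"
  using assms
proof (induction B rule: finite_induct)
  case empty
  then show ?case by (intro uniform_OI[of _ _ 0]) auto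
next
  case (insert x F)
  then show ?case using uniform_O_add[of W "f x" k "\<lambda>\<sigma> \<omega>. \<Sum>b\<in>F. f b \<sigma> \<omega>"] by simp
qed

lemma uniform_O_combination:
  assumes "finite B" "\<And>b. b \<in> B \<Longrightarrow> uniform_O W (c b) k"
  shows "uniform_O W (\<lambda>\<sigma> \<omega>. \<Sum>b\<in>B. c b \<sigma> \<omega> *\<^sub>R v b) k"
proof (rule uniform_O_sum[OF assms(1)])
  fix b assume "b \<in> B"
  have "uniform_O W (\<lambda>\<sigma> \<omega>. v b) 0" by (rule uniform_O_const[of W "\<lambda>_. v b" "norm (v b)"]) simp
  thus "uniform_O W (\<lambda>\<sigma> \<omega>. c b \<sigma> \<omega> *\<^sub>R v b) k"
    by (rule uniform_O_scaleR[OF assms(2)[OF \<open>b \<in> B\<close>]]) simp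
qed

lemma uniform_O_sigma: "uniform_O W (\<lambda>\<sigma> \<omega>. \<sigma>) 1"
  by (rule uniform_OI[of _ _ 1]) (use eventually_at_right_less[of 0] in \<open>eventually_elim, auto\<close>)

lemma uniform_O_eventually_le_1:
  assumes "uniform_O W f 1"
  shows "\<forall>\<^sub>F \<sigma> in at_right 0. \<forall>\<omega>\<in>W. norm (f \<sigma> \<omega>) \<le> 1"
proof -
  obtain C where C: "\<forall>\<^sub>F \<sigma> in at_right 0. \<forall>\<omega>\<in>W. norm (f \<sigma> \<omega>) \<le> C * \<sigma>^1"
    using assms uniform_O_def by blast
  have "1 / (\<bar>C\<bar> + 1) > 0" by (simp add: add_nonneg_pos)
  from C eventually_at_right_below[OF this] show ?thesis
  proof eventually_elim
    case (elim \<sigma>)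
    have "C * \<sigma> \<le> (\<bar>C\<bar> + 1) * \<sigma>" using elim by (intro mult_right_mono) auto
    also have "\<dots> \<le> 1" using elim by (simp add: field_simps)
    finally show ?case using elim by (auto intro: order_trans)
  qed
qed

lemma uniform_O_cube:
  fixes y :: "real \<Rightarrow> 'w \<Rightarrow> 'v::real_normed_vector"
  assumes "uniform_O W y 1" "\<forall>\<^sub>F \<sigma> in at_right 0. \<forall>\<omega>\<in>W. norm (r \<sigma> \<omega>) \<le> norm (y \<sigma> \<omega>)^3"
  shows "uniform_O W r 3"
proof -
  obtain C where C: "\<forall>\<^sub>F \<sigma> in at_right 0. \<forall>\<omega>\<in>W. norm (y \<sigma> \<omega>) \<le> C * \<sigma>^1"
    using assms uniform_O_def by blast
  from C assms(2) eventually_at_right_less[of 0]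
  have "\<forall>\<^sub>F \<sigma> in at_right 0. \<forall>\<omega>\<in>W. norm (r \<sigma> \<omega>) \<le> \<bar>C\<bar>^3 * \<sigma>^3"
  proof eventually_elim
    case (elim \<sigma>)
    show ?case
    proof
      fix \<omega> assume w: "\<omega> \<in> W"
      have "norm (r \<sigma> \<omega>) \<le> norm (y \<sigma> \<omega>)^3" using elim w by auto
      also have "\<dots> \<le> (\<bar>C\<bar> * \<sigma>)^3" using elim w
        by (intro power_mono) (auto intro: order_trans[OF _ mult_right_mono[of C "\<bar>C\<bar>"]])
      finally show "norm (r \<sigma> \<omega>) \<le> \<bar>C\<bar>^3 * \<sigma>^3" by (simp add: power_mult_distrib)
    qed
  qed
  thus ?thesis by (rule uniform_OI)
qed

section \<open>Matrices of the form $\sum_b c_b x_b x_b^T$\<close>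

lemma outer_prod_mult: "outer_prod x y *v v = (y \<bullet> v) *\<^sub>R x"
  by (simp add: vec_eq_iff outer_prod_def matrix_vector_mult_def inner_vec_def sum_distrib_left
      algebra_simps)

lemma sum_matrix_vector_mult:
  "finite B \<Longrightarrow> (\<Sum>b\<in>B. (A b :: real^'n^'m)) *v v = (\<Sum>b\<in>B. A b *v v)"
  by (induction B rule: finite_induct) (auto simp: matrix_vector_mult_add_rdistrib)

lemma gram_mult:
  "finite B \<Longrightarrow> (\<Sum>b\<in>B. outer_prod (xvec b) (xvec b)) *v v = (\<Sum>b\<in>B. (xvec b \<bullet> v) *\<^sub>R xvec b)"
  by (simp add: sum_matrix_vector_mult outer_prod_mult)

lemma Mmat_mult:
  "finite B \<Longrightarrow> Mmat B S0 D0 *v v = (\<Sum>b\<in>B. ((Sbar S0 D0 b)^2 * (xvec b \<bullet> v)) *\<^sub>R xvec b)"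
  by (simp add: Mmat_def sum_matrix_vector_mult outer_prod_mult scaleR_matrix_vector_assoc[symmetric])

lemma matrix_inv_mult:
  assumes "invertible (A::real^'n^'n)"
  shows "matrix_inv A *v (A *v v) = v" "A *v (matrix_inv A *v v) = v"
proof -
  have "A ** matrix_inv A = mat 1 \<and> matrix_inv A ** A = mat 1"
    using someI_ex[OF assms[unfolded invertible_def]] unfolding matrix_inv_def by auto
  thus "matrix_inv A *v (A *v v) = v" "A *v (matrix_inv A *v v) = v"
    by (auto simp: matrix_vector_mul_assoc)
qed

(* Positive weights do not destroy invertibility: M v = 0 forces x_b . v = 0 for all b. *)
lemma Mmat_invertible:
  assumes "finite B" "S0 > 0" "invertible (\<Sum>b\<in>B. outer_prod (xvec b) (xvec b))"
  shows "invertible (Mmat B S0 D0)"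
proof -
  have "v = 0" if h: "Mmat B S0 D0 *v v = 0" for v
  proof -
    have pos: "\<And>b. Sbar S0 D0 b > 0" using assms(2) by (simp add: Sbar_def)
    have "0 = (Mmat B S0 D0 *v v) \<bullet> v" using h by simp
    also have "\<dots> = (\<Sum>b\<in>B. (Sbar S0 D0 b)^2 * (xvec b \<bullet> v)^2)"
      by (simp add: Mmat_mult[OF assms(1)] inner_sum_left power2_eq_square algebra_simps)
    finally have "(\<Sum>b\<in>B. (Sbar S0 D0 b)^2 * (xvec b \<bullet> v)^2) = 0" by simp
    hence "\<forall>b\<in>B. (Sbar S0 D0 b)^2 * (xvec b \<bullet> v)^2 = 0"
      by (subst (asm) sum_nonneg_eq_0_iff) (auto simp: assms(1))
    hence "\<forall>b\<in>B. xvec b \<bullet> v = 0" using pos by (metis less_irrefl mult_eq_0_iff power_not_zero)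
    hence "(\<Sum>b\<in>B. outer_prod (xvec b) (xvec b)) *v v = (\<Sum>b\<in>B. outer_prod (xvec b) (xvec b)) *v 0"
      by (simp add: gram_mult[OF assms(1)])
    thus "v = 0" using injD[OF inj_matrix_vector_mult[OF assms(3)]] by blast
  qed
  hence "\<exists>B'. B' ** Mmat B S0 D0 = mat 1" using matrix_left_invertible_ker by blast
  thus ?thesis using invertible_left_inverse by blast
qed

section \<open>The Rician signal and the exponential\<close>

lemma Sobs_square:
  assumes "norm (u b) = 1"
  shows "(Sobs S0 D0 u \<sigma> e b)^2
           = (Sbar S0 D0 b)^2 + 2*\<sigma>*Sbar S0 D0 b*(u b \<bullet> e b) + \<sigma>^2 * (norm (e b))^2"
proof -
  let ?a = "Sbar S0 D0 b *\<^sub>R u b" and ?c = "\<sigma> *\<^sub>R e b"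
  have uu: "u b \<bullet> u b = 1" using assms by (simp add: power2_norm_eq_inner[symmetric])
  have "(norm (?a + ?c))^2 = (?a + ?c) \<bullet> (?a + ?c)" by (rule power2_norm_eq_inner)
  also have "\<dots> = (Sbar S0 D0 b)^2 * (u b \<bullet> u b) + 2*\<sigma>*Sbar S0 D0 b*(u b \<bullet> e b) + \<sigma>^2 * (e b \<bullet> e b)"
    by (simp add: inner_commute[of "e b" "u b"] algebra_simps power2_eq_square)
  finally show ?thesis unfolding Sobs_def uu by (simp add: power2_norm_eq_inner)
qed

lemma Sobs_deviation:
  assumes "norm (u b) = 1" "S0 > 0"
  shows "\<bar>Sobs S0 D0 u \<sigma> e b - Sbar S0 D0 b\<bar> \<le> \<bar>\<sigma>\<bar> * norm (e b)"
proof -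
  have "norm (Sbar S0 D0 b *\<^sub>R u b) = Sbar S0 D0 b" using assms by (simp add: Sbar_def)
  hence "\<bar>Sobs S0 D0 u \<sigma> e b - Sbar S0 D0 b\<bar>
           = \<bar>norm (Sbar S0 D0 b *\<^sub>R u b + \<sigma> *\<^sub>R e b) - norm (Sbar S0 D0 b *\<^sub>R u b)\<bar>"
    by (simp add: Sobs_def)
  also have "\<dots> \<le> norm (\<sigma> *\<^sub>R e b)"
    using norm_triangle_ineq3[of "Sbar S0 D0 b *\<^sub>R u b + \<sigma> *\<^sub>R e b" "Sbar S0 D0 b *\<^sub>R u b"] by simp
  finally show ?thesis by simp
qed

lemma exp_taylor2_bound:
  fixes y :: real
  assumes "\<bar>y\<bar> \<le> 1"
  shows "\<bar>exp (-y) - 1 + y - y^2/2\<bar> \<le> \<bar>y\<bar>^3"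
proof -
  obtain t where t: "\<bar>t\<bar> \<le> \<bar>-y\<bar>"
    "exp (-y) = (\<Sum>m<3. ((-y) ^ m) / fact m) + (exp t / fact 3) * (-y) ^ 3"
    using Maclaurin_exp_le[of "-y" 3] by blast
  have s: "(\<Sum>m<3. ((-y) ^ m) / fact m) = 1 - y + y^2/2"
    by (simp add: numeral_3_eq_3 power2_eq_square)
  have "exp t \<le> exp 1" using t assms by simp
  also have "\<dots> \<le> 3" using exp_le by simp
  finally have et: "exp t \<le> 3" .
  have "\<bar>exp (-y) - 1 + y - y^2/2\<bar> = (exp t / 6) * \<bar>y\<bar>^3"
    using t(2) s by (simp add: fact_numeral abs_mult power_abs)
  also have "\<dots> \<le> \<bar>y\<bar>^3" using et by (intro mult_left_le_one_le) auto
  finally show ?thesis .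
qed

lemma abs_le_of_exp_near_1:
  fixes y :: real
  assumes "\<bar>exp (-y) - 1\<bar> \<le> \<rho>" "\<rho> \<le> 1/2"
  shows "\<bar>y\<bar> \<le> 2*\<rho>"
proof (cases "y \<ge> 0")
  case True
  have g: "exp (-y) \<ge> 1/2" using assms by linarith
  have "exp y - 1 \<ge> y" using exp_ge_add_one_self[of y] by linarith
  hence "1 - exp (-y) = exp (-y) * (exp y - 1)" by (simp add: exp_minus field_simps)
  also have "\<dots> \<ge> (1/2) * y" using g \<open>exp y - 1 \<ge> y\<close> True by (intro mult_mono) auto
  finally show ?thesis using assms True by linarith
next
  case False
  have "exp (-y) \<ge> 1 + (-y)" by (rule exp_ge_add_one_self)
  thus ?thesis using assms False by linarith
qed

section \<open>Consistency and the first-order condition\<close>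

locale dti_design =
  fixes B :: "(real^3) set" and S0 :: real and D0 :: "real^6" and u :: "real^3 \<Rightarrow> real^2"
  assumes fin: "finite B" and S0pos: "S0 > 0"
    and Ginv: "invertible (\<Sum>b\<in>B. outer_prod (xvec b) (xvec b))"
    and unorm: "\<forall>b\<in>B. norm (u b) = 1"
begin

abbreviation "G \<equiv> (\<Sum>b\<in>B. outer_prod (xvec b) (xvec b))"
abbreviation "Sb b \<equiv> Sbar S0 D0 b"
abbreviation "obj \<sigma> e D \<equiv> NLobj B S0 D0 u \<sigma> e D"

lemma Sb_pos: "Sb b > 0" using S0pos by (simp add: Sbar_def)

lemma fitted_signal: "S0 * exp (- (xvec b \<bullet> D)) = Sb b * exp (- (xvec b \<bullet> (D - D0)))"
  by (simp add: Sbar_def inner_diff_right exp_diff exp_minus field_simps)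

lemma fitted_signal_close:
  assumes e: "\<forall>b\<in>B. norm (e b) \<le> K" and \<sigma>: "0 \<le> \<sigma>" and F: "obj \<sigma> e D \<le> obj \<sigma> e D0"
    and b: "b \<in> B"
  shows "Sb b * \<bar>exp (- (xvec b \<bullet> (D - D0))) - 1\<bar> \<le> (real (card B) + 2) * (\<sigma> * K)"
proof -
  define n where "n = real (card B)"
  let ?S = "\<lambda>b. Sobs S0 D0 u \<sigma> e b"
  have "0 \<le> K" using e b by (meson norm_ge_zero order_trans)
  hence \<sigma>K: "0 \<le> \<sigma> * K" using \<sigma> by simp
  have close: "\<bar>?S b' - Sb b'\<bar> \<le> \<sigma> * K" if "b' \<in> B" for b'
    using Sobs_deviation[of u b' S0 D0 \<sigma> e] unorm that S0pos e \<sigma>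
    by (smt (verit, best) mult_left_mono)
  have "obj \<sigma> e D0 = (\<Sum>b\<in>B. (?S b - Sb b)^2)" by (simp add: NLobj_def Sbar_def)
  also have "\<dots> \<le> (\<Sum>b\<in>B. (\<sigma> * K)^2)"
  proof (rule sum_mono)
    fix b' assume "b' \<in> B"
    show "(?S b' - Sb b')^2 \<le> (\<sigma> * K)^2"
      using power_mono[OF close[OF \<open>b' \<in> B\<close>] abs_ge_zero, of 2] by simp
  qed
  also have "\<dots> = n * (\<sigma> * K)^2" by (simp add: n_def)
  also have "\<dots> \<le> (n + 1)^2 * (\<sigma> * K)^2"
  proof (rule mult_right_mono)
    have "0 \<le> n * n" by simp
    thus "n \<le> (n + 1)^2" by (simp add: n_def power2_eq_square algebra_simps)
  qed simp
  finally have obj0: "obj \<sigma> e D0 \<le> ((n + 1) * (\<sigma> * K))^2" by (simp add: power_mult_distrib)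
  have "(?S b - S0 * exp (- (xvec b \<bullet> D)))^2 \<le> obj \<sigma> e D"
    unfolding NLobj_def by (rule member_le_sum[OF b _ fin]) auto
  hence "\<bar>?S b - S0 * exp (- (xvec b \<bullet> D))\<bar>^2 \<le> ((n + 1) * (\<sigma> * K))^2"
    using F obj0 by simp
  hence "\<bar>?S b - S0 * exp (- (xvec b \<bullet> D))\<bar> \<le> (n + 1) * (\<sigma> * K)"
    by (rule power2_le_imp_le) (use \<sigma>K in \<open>simp add: n_def\<close>)
  hence "\<bar>Sb b * exp (- (xvec b \<bullet> (D - D0))) - Sb b\<bar> \<le> (n + 2) * (\<sigma> * K)"
    using close[OF b] unfolding fitted_signal by (simp add: algebra_simps)
  hence "\<bar>Sb b * (exp (- (xvec b \<bullet> (D - D0))) - 1)\<bar> \<le> (n + 2) * (\<sigma> * K)"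
    by (simp add: right_diff_distrib)
  thus ?thesis using Sb_pos[of b] by (simp add: n_def abs_mult)
qed

lemma projection_rate:
  assumes "K \<ge> 0"
  obtains \<sigma>1 C where "\<sigma>1 > 0"
    "\<And>\<sigma> e D b. 0 < \<sigma> \<Longrightarrow> \<sigma> < \<sigma>1 \<Longrightarrow> \<forall>b\<in>B. norm (e b) \<le> K \<Longrightarrow> obj \<sigma> e D \<le> obj \<sigma> e D0 \<Longrightarrow>
       b \<in> B \<Longrightarrow> \<bar>xvec b \<bullet> (D - D0)\<bar> \<le> C * \<sigma>"
proof -
  define A where "A = (real (card B) + 2) * K * (\<Sum>b\<in>B. 1 / Sb b)"
  have A0: "A \<ge> 0" unfolding A_def using assms Sb_pos by (intro mult_nonneg_nonneg sum_nonneg) (auto intro: less_imp_le)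
  have pos: "1 / (2 * A + 1) > 0" using A0 by simp
  have bound: "\<bar>xvec b \<bullet> (D - D0)\<bar> \<le> (2 * A) * \<sigma>"
    if \<sigma>: "0 < \<sigma>" "\<sigma> < 1 / (2 * A + 1)" and e: "\<forall>b\<in>B. norm (e b) \<le> K"
      and F: "obj \<sigma> e D \<le> obj \<sigma> e D0" and b: "b \<in> B" for \<sigma> e D b
  proof -
    have "\<bar>exp (- (xvec b \<bullet> (D - D0))) - 1\<bar> \<le> (real (card B) + 2) * (\<sigma> * K) * (1 / Sb b)"
      using fitted_signal_close[OF e less_imp_le[OF \<sigma>(1)] F b] Sb_pos[of b] by (simp add: field_simps)
    also have "\<dots> \<le> (real (card B) + 2) * (\<sigma> * K) * (\<Sum>b\<in>B. 1 / Sb b)"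
      using \<sigma> assms Sb_pos by (intro mult_left_mono member_le_sum[OF b _ fin]) (auto intro: less_imp_le)
    also have "\<dots> = \<sigma> * A" by (simp add: A_def)
    finally have r: "\<bar>exp (- (xvec b \<bullet> (D - D0))) - 1\<bar> \<le> \<sigma> * A" .
    have "\<sigma> * (2 * A + 1) < 1" using \<sigma> A0 by (simp add: field_simps)
    hence "\<sigma> * A \<le> 1/2" using \<sigma> by (simp add: algebra_simps)
    thus ?thesis using abs_le_of_exp_near_1[OF r] by (simp add: algebra_simps)
  qed
  show ?thesis by (rule that[OF pos bound])
qed

(* Since the x_b span R^6, the projections x_b . v control the norm of v. *)
lemma norm_le_by_projections:
  assumes t: "\<forall>b\<in>B. \<bar>xvec b \<bullet> v\<bar> \<le> t"
  shows "norm v \<le> (onorm ((*v) (matrix_inv G)) * (\<Sum>b\<in>B. norm (xvec b))) * t"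
proof -
  let ?L = "onorm ((*v) (matrix_inv G))"
  have "norm v = norm (matrix_inv G *v (\<Sum>b\<in>B. (xvec b \<bullet> v) *\<^sub>R xvec b))"
    using matrix_inv_mult(1)[OF Ginv, of v] by (simp add: gram_mult[OF fin])
  also have "\<dots> \<le> ?L * norm (\<Sum>b\<in>B. (xvec b \<bullet> v) *\<^sub>R xvec b)"
    by (rule onorm[OF matrix_vector_mul_bounded_linear])
  also have "\<dots> \<le> ?L * (\<Sum>b\<in>B. t * norm (xvec b))"
    using t by (intro mult_left_mono onorm_pos_le[OF matrix_vector_mul_bounded_linear]
        order_trans[OF norm_sum sum_mono]) (auto intro: mult_right_mono)
  also have "\<dots> = (?L * (\<Sum>b\<in>B. norm (xvec b))) * t"
    by (simp add: sum_distrib_left[symmetric] algebra_simps)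
  finally show ?thesis .
qed

lemma consistency:
  assumes "K \<ge> 0"
  obtains \<sigma>1 C where "\<sigma>1 > 0"
    "\<And>\<sigma> e D. 0 < \<sigma> \<Longrightarrow> \<sigma> < \<sigma>1 \<Longrightarrow> \<forall>b\<in>B. norm (e b) \<le> K \<Longrightarrow> obj \<sigma> e D \<le> obj \<sigma> e D0 \<Longrightarrow>
       norm (D - D0) \<le> C * \<sigma>"
proof (rule projection_rate[OF assms])
  fix \<sigma>1 Cp assume \<sigma>1: "\<sigma>1 > 0" and proj: "\<And>\<sigma> e D b. 0 < \<sigma> \<Longrightarrow> \<sigma> < \<sigma>1 \<Longrightarrow>
      \<forall>b\<in>B. norm (e b) \<le> K \<Longrightarrow> obj \<sigma> e D \<le> obj \<sigma> e D0 \<Longrightarrow> b \<in> B \<Longrightarrow> \<bar>xvec b \<bullet> (D - D0)\<bar> \<le> Cp * \<sigma>"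
  let ?Cn = "onorm ((*v) (matrix_inv G)) * (\<Sum>b\<in>B. norm (xvec b))"
  have "norm (D - D0) \<le> (?Cn * Cp) * \<sigma>"
    if "0 < \<sigma>" "\<sigma> < \<sigma>1" "\<forall>b\<in>B. norm (e b) \<le> K" "obj \<sigma> e D \<le> obj \<sigma> e D0" for \<sigma> e D
  proof -
    have "\<forall>b\<in>B. \<bar>xvec b \<bullet> (D - D0)\<bar> \<le> Cp * \<sigma>" using proj[OF that] by blast
    hence "norm (D - D0) \<le> ?Cn * (Cp * \<sigma>)" by (rule norm_le_by_projections)
    thus ?thesis by (simp add: mult.assoc)
  qed
  thus ?thesis by (rule that[OF \<sigma>1])
qed

lemma obj_continuous: "continuous_on S (obj \<sigma> e)"
  unfolding NLobj_def by (intro continuous_intros)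

lemma minimiser_exists:
  assumes "\<And>D. obj \<sigma> e D \<le> obj \<sigma> e D0 \<Longrightarrow> norm (D - D0) \<le> 1"
  shows "\<exists>D. \<forall>D'. obj \<sigma> e D \<le> obj \<sigma> e D'"
proof -
  have "\<exists>x\<in>cball D0 1. \<forall>y\<in>cball D0 1. obj \<sigma> e x \<le> obj \<sigma> e y"
    by (rule continuous_attains_inf[OF compact_cball]) (auto intro: obj_continuous)
  then obtain D where D: "D \<in> cball D0 1" "\<forall>y\<in>cball D0 1. obj \<sigma> e D \<le> obj \<sigma> e y" by blast
  have "obj \<sigma> e D \<le> obj \<sigma> e D'" for D'
  proof (cases "D' \<in> cball D0 1")
    case False
    have "obj \<sigma> e D \<le> obj \<sigma> e D0" using D by auto
    moreover have "\<not> obj \<sigma> e D' \<le> obj \<sigma> e D0"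
      using False assms[of D'] by (auto simp: dist_norm norm_minus_commute)
    ultimately show ?thesis by linarith
  qed (use D in auto)
  thus ?thesis by blast
qed

(* First-order condition: at a minimiser D, sum_b (S_b - f_b) f_b x_b = 0 with f_b the fitted
   signal; it is the derivative of the objective along that very vector. *)
lemma first_order_condition:
  assumes min: "\<forall>D'. obj \<sigma> e D \<le> obj \<sigma> e D'"
  shows "(\<Sum>b\<in>B. ((Sobs S0 D0 u \<sigma> e b - S0 * exp (- (xvec b \<bullet> D))) * (S0 * exp (- (xvec b \<bullet> D))))
           *\<^sub>R xvec b) = 0"
proof -
  let ?S = "\<lambda>b. Sobs S0 D0 u \<sigma> e b"
  let ?f = "\<lambda>b. S0 * exp (- (xvec b \<bullet> D))"
  define V where "V = (\<Sum>b\<in>B. ((?S b - ?f b) * ?f b) *\<^sub>R xvec b)"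
  define \<phi> where "\<phi> = (\<lambda>t. \<Sum>b\<in>B. (?S b - S0 * exp (- (xvec b \<bullet> D + t * (xvec b \<bullet> V))))^2)"
  have \<phi>_obj: "\<phi> t = obj \<sigma> e (D + t *\<^sub>R V)" for t
    by (simp add: \<phi>_def NLobj_def inner_add_right)
  have der: "(\<phi> has_real_derivative (\<Sum>b\<in>B. 2 * (?S b - ?f b) * (?f b * (xvec b \<bullet> V)))) (at 0)"
    unfolding \<phi>_def by (auto intro!: derivative_eq_intros sum.cong simp: algebra_simps)
  have "(\<Sum>b\<in>B. 2 * (?S b - ?f b) * (?f b * (xvec b \<bullet> V))) = 0"
    by (rule DERIV_local_min[OF der zero_less_one]) (use min in \<open>simp add: \<phi>_obj\<close>)
  moreover have "(\<Sum>b\<in>B. 2 * (?S b - ?f b) * (?f b * (xvec b \<bullet> V))) = 2 * (V \<bullet> V)"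
    unfolding V_def inner_sum_left by (simp add: V_def[symmetric] sum_distrib_left algebra_simps)
  ultimately have "V \<bullet> V = 0" by simp
  thus ?thesis unfolding V_def by simp
qed

end

section \<open>Expansion of the estimator for bounded noise\<close>

locale bounded_noise = dti_design +
  fixes W :: "'w set" and e :: "'w \<Rightarrow> real^3 \<Rightarrow> real^2" and K :: real
    and Dh :: "real \<Rightarrow> 'w \<Rightarrow> real^6"
  assumes K0: "K \<ge> 0" and eK: "\<forall>\<omega>\<in>W. \<forall>b\<in>B. norm (e \<omega> b) \<le> K"
    and Dh_min: "\<forall>\<sigma>>0. \<forall>\<omega>\<in>W.
           (\<exists>D. \<forall>D'. NLobj B S0 D0 u \<sigma> (e \<omega>) D \<le> NLobj B S0 D0 u \<sigma> (e \<omega>) D') \<longrightarrow>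
           (\<forall>D'. NLobj B S0 D0 u \<sigma> (e \<omega>) (Dh \<sigma> \<omega>) \<le> NLobj B S0 D0 u \<sigma> (e \<omega>) D')"
begin

abbreviation "MM \<equiv> Mmat B S0 D0"

lemma MM_invertible: "invertible MM" by (rule Mmat_invertible[OF fin S0pos Ginv])

definition err :: "real \<Rightarrow> 'w \<Rightarrow> real^6" where
  "err \<sigma> \<omega> = Dh \<sigma> \<omega> - D0"
definition proj :: "real^3 \<Rightarrow> real \<Rightarrow> 'w \<Rightarrow> real" where
  "proj b \<sigma> \<omega> = xvec b \<bullet> err \<sigma> \<omega>"
definition sdev :: "real^3 \<Rightarrow> real \<Rightarrow> 'w \<Rightarrow> real" where
  "sdev b \<sigma> \<omega> = Sobs S0 D0 u \<sigma> (e \<omega>) b - Sb b"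
(* The noise component in phase with the signal, and the second-order Rician bias coefficient. *)
definition phase :: "real^3 \<Rightarrow> 'w \<Rightarrow> real" where
  "phase b \<omega> = u b \<bullet> e \<omega> b"
definition bias :: "real^3 \<Rightarrow> 'w \<Rightarrow> real" where
  "bias b \<omega> = ((norm (e \<omega> b))^2 - (phase b \<omega>)^2) / (2 * Sb b)"
definition expq :: "real^3 \<Rightarrow> real \<Rightarrow> 'w \<Rightarrow> real" where
  "expq b \<sigma> \<omega> = exp (- proj b \<sigma> \<omega>) - 1 + proj b \<sigma> \<omega>"
definition exp_rem :: "real^3 \<Rightarrow> real \<Rightarrow> 'w \<Rightarrow> real" where
  "exp_rem b \<sigma> \<omega> = expq b \<sigma> \<omega> - (proj b \<sigma> \<omega>)^2 / 2"
(* The part of (S_b - f_b) f_b beyond its second-order expansion. *)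
definition cubic_err :: "real^3 \<Rightarrow> real \<Rightarrow> 'w \<Rightarrow> real" where
  "cubic_err b \<sigma> \<omega> =
   Sb b * (2 * Sb b * proj b \<sigma> \<omega> * expq b \<sigma> \<omega> + expq b \<sigma> \<omega> * sdev b \<sigma> \<omega> - Sb b * (expq b \<sigma> \<omega>)^2)
   - (Sb b)^2 * exp_rem b \<sigma> \<omega>"
definition d1 :: "'w \<Rightarrow> real^6" where
  "d1 \<omega> = D1NL B S0 D0 u (e \<omega>)"
definition d2 :: "'w \<Rightarrow> real^6" where
  "d2 \<omega> = D2NL B S0 D0 u (e \<omega>)"
definition proj_d1 :: "real^3 \<Rightarrow> 'w \<Rightarrow> real" where
  "proj_d1 b \<omega> = xvec b \<bullet> d1 \<omega>"
(* The coefficients of M D2, and the residual of the first-order condition after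
   subtracting its first-order part. *)
definition d2_coef :: "real^3 \<Rightarrow> 'w \<Rightarrow> real" where
  "d2_coef b \<omega> =
   (3/2) * (Sb b)^2 * (proj_d1 b \<omega>)^2 + Sb b * proj_d1 b \<omega> * phase b \<omega> - Sb b * bias b \<omega>"
definition resid :: "real^3 \<Rightarrow> real \<Rightarrow> 'w \<Rightarrow> real" where
  "resid b \<sigma> \<omega> = Sb b * (\<sigma> * phase b \<omega> - sdev b \<sigma> \<omega>) + (3/2) * (Sb b)^2 * (proj b \<sigma> \<omega>)^2
   + Sb b * proj b \<sigma> \<omega> * sdev b \<sigma> \<omega> - cubic_err b \<sigma> \<omega>"

lemma fitted_residual_product:
  "(Sobs S0 D0 u \<sigma> (e \<omega>) b - S0 * exp (- (xvec b \<bullet> Dh \<sigma> \<omega>))) * (S0 * exp (- (xvec b \<bullet> Dh \<sigma> \<omega>)))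
   = Sb b * sdev b \<sigma> \<omega> + (Sb b)^2 * proj b \<sigma> \<omega> - (3/2) * (Sb b)^2 * (proj b \<sigma> \<omega>)^2
     - Sb b * proj b \<sigma> \<omega> * sdev b \<sigma> \<omega> + cubic_err b \<sigma> \<omega>"
proof -
  have f: "S0 * exp (- (xvec b \<bullet> Dh \<sigma> \<omega>)) = Sb b * (1 - proj b \<sigma> \<omega> + expq b \<sigma> \<omega>)"
    by (simp add: fitted_signal expq_def proj_def err_def)
  have S: "Sobs S0 D0 u \<sigma> (e \<omega>) b = Sb b + sdev b \<sigma> \<omega>" by (simp add: sdev_def)
  show ?thesis unfolding f S cubic_err_def exp_rem_def by (simp add: algebra_simps power2_eq_square)
qed

lemma MM_err: "MM *v err \<sigma> \<omega> = (\<Sum>b\<in>B. ((Sb b)^2 * proj b \<sigma> \<omega>) *\<^sub>R xvec b)"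
  by (simp add: Mmat_mult[OF fin] proj_def)

lemma MM_d1: "MM *v d1 \<omega> = (\<Sum>b\<in>B. (- (Sb b * phase b \<omega>)) *\<^sub>R xvec b)"
  unfolding d1_def D1NL_def
  by (simp add: matrix_inv_mult(2)[OF MM_invertible] phase_def sum_negf
      linear_neg[OF matrix_vector_mul_linear])

lemma MM_d2: "MM *v d2 \<omega> = (\<Sum>b\<in>B. d2_coef b \<omega> *\<^sub>R xvec b)"
proof -
  have "MM *v d2 \<omega> = (\<Sum>b\<in>B. ((Sb b)^2 * (proj_d1 b \<omega>)^2 + (1/2) * (Sb b * proj_d1 b \<omega> + phase b \<omega>)^2
                           - (1/2) * (norm (e \<omega> b))^2) *\<^sub>R xvec b)"
    unfolding d2_def D2NL_def Let_def matrix_inv_mult(2)[OF MM_invertible]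
    by (simp add: proj_d1_def d1_def phase_def scaleR_sum_right sum_subtractf[symmetric]
        sum.distrib[symmetric] scaleR_add_left scaleR_diff_left)
  also have "\<dots> = (\<Sum>b\<in>B. d2_coef b \<omega> *\<^sub>R xvec b)"
  proof (rule sum.cong[OF refl])
    fix b
    have "Sb b \<noteq> 0" using Sb_pos[of b] by simp
    thus "((Sb b)^2 * (proj_d1 b \<omega>)^2 + (1/2) * (Sb b * proj_d1 b \<omega> + phase b \<omega>)^2
             - (1/2) * (norm (e \<omega> b))^2) *\<^sub>R xvec b = d2_coef b \<omega> *\<^sub>R xvec b"
      by (simp add: d2_coef_def bias_def field_simps power2_eq_square)
  qed
  finally show ?thesis .
qed

lemma residual_equation:
  assumes "\<forall>D'. obj \<sigma> (e \<omega>) (Dh \<sigma> \<omega>) \<le> obj \<sigma> (e \<omega>) D'"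
  shows "MM *v (err \<sigma> \<omega> - \<sigma> *\<^sub>R d1 \<omega> - \<tau> *\<^sub>R d2 \<omega>)
           = (\<Sum>b\<in>B. (resid b \<sigma> \<omega> - \<tau> * d2_coef b \<omega>) *\<^sub>R xvec b)"
proof -
  let ?r = "\<lambda>b. Sb b * sdev b \<sigma> \<omega> + (Sb b)^2 * proj b \<sigma> \<omega> - (3/2) * (Sb b)^2 * (proj b \<sigma> \<omega>)^2
     - Sb b * proj b \<sigma> \<omega> * sdev b \<sigma> \<omega> + cubic_err b \<sigma> \<omega>"
  have foc: "(\<Sum>b\<in>B. ?r b *\<^sub>R xvec b) = 0"
    using first_order_condition[OF assms] by (simp add: fitted_residual_product)
  have "MM *v (err \<sigma> \<omega> - \<sigma> *\<^sub>R d1 \<omega> - \<tau> *\<^sub>R d2 \<omega>)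
      = MM *v err \<sigma> \<omega> - (\<Sum>b\<in>B. ?r b *\<^sub>R xvec b) - \<sigma> *\<^sub>R (MM *v d1 \<omega>) - \<tau> *\<^sub>R (MM *v d2 \<omega>)"
    using foc by (simp add: matrix_vector_mult_diff_distrib matrix_vector_mult_scaleR)
  also have "\<dots> = (\<Sum>b\<in>B. ((Sb b)^2 * proj b \<sigma> \<omega> - ?r b - \<sigma> * (- (Sb b * phase b \<omega>))
                        - \<tau> * d2_coef b \<omega>) *\<^sub>R xvec b)"
    unfolding MM_err MM_d1 MM_d2
    by (simp only: scaleR_sum_right scaleR_scaleR sum_subtractf[symmetric] scaleR_diff_left[symmetric])
  also have "\<dots> = (\<Sum>b\<in>B. (resid b \<sigma> \<omega> - \<tau> * d2_coef b \<omega>) *\<^sub>R xvec b)"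
    by (rule sum.cong[OF refl]) (simp add: resid_def algebra_simps)
  finally show ?thesis .
qed

(* From S_b^2 = (Sbar_b + sdev_b)^2 = Sbar_b^2 + 2 sigma Sbar_b phase_b + sigma^2 norm(eps_b)^2. *)
lemma sdev_first_order_identity:
  assumes "b \<in> B"
  shows "sdev b \<sigma> \<omega> - \<sigma> * phase b \<omega> = (\<sigma>^2 * (norm (e \<omega> b))^2 - (sdev b \<sigma> \<omega>)^2) / (2 * Sb b)"
proof -
  have "(Sb b + sdev b \<sigma> \<omega>)^2 = (Sb b)^2 + 2*\<sigma>*Sb b*phase b \<omega> + \<sigma>^2 * (norm (e \<omega> b))^2"
    using Sobs_square[of u b S0 D0 \<sigma> "e \<omega>"] unorm assms by (simp add: sdev_def phase_def)
  hence "2 * Sb b * (sdev b \<sigma> \<omega> - \<sigma> * phase b \<omega>) = \<sigma>^2 * (norm (e \<omega> b))^2 - (sdev b \<sigma> \<omega>)^2"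
    by (simp add: power2_eq_square algebra_simps)
  thus ?thesis using Sb_pos[of b] by (simp add: field_simps)
qed

lemma sdev_second_order_identity:
  assumes "b \<in> B"
  shows "sdev b \<sigma> \<omega> - \<sigma> * phase b \<omega> - \<sigma>^2 * bias b \<omega>
           = (- 1 / (2 * Sb b)) * ((sdev b \<sigma> \<omega> - \<sigma> * phase b \<omega>) * (sdev b \<sigma> \<omega> + \<sigma> * phase b \<omega>))"
proof -
  have "sdev b \<sigma> \<omega> - \<sigma> * phase b \<omega> - \<sigma>^2 * bias b \<omega>
      = (\<sigma>^2 * (norm (e \<omega> b))^2 - (sdev b \<sigma> \<omega>)^2) / (2 * Sb b) - \<sigma>^2 * bias b \<omega>"
    using sdev_first_order_identity[OF assms] by simp
  also have "\<dots> = (- 1 / (2 * Sb b)) * ((sdev b \<sigma> \<omega> - \<sigma> * phase b \<omega>) * (sdev b \<sigma> \<omega> + \<sigma> * phase b \<omega>))"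
    using Sb_pos[of b] by (simp add: bias_def field_simps power2_eq_square)
  finally show ?thesis .
qed

(* For sigma small a minimiser exists, so Dh is one, and err = O(sigma). *)
lemma Dh_minimiser_and_rate:
  obtains C where "\<forall>\<^sub>F \<sigma> in at_right 0. \<forall>\<omega>\<in>W.
     (\<forall>D'. obj \<sigma> (e \<omega>) (Dh \<sigma> \<omega>) \<le> obj \<sigma> (e \<omega>) D') \<and> norm (err \<sigma> \<omega>) \<le> C * \<sigma>"
proof (rule consistency[OF K0])
  fix \<sigma>1 C assume \<sigma>1: "\<sigma>1 > 0" and cons: "\<And>\<sigma> e D. 0 < \<sigma> \<Longrightarrow> \<sigma> < \<sigma>1 \<Longrightarrow>
      \<forall>b\<in>B. norm (e b) \<le> K \<Longrightarrow> obj \<sigma> e D \<le> obj \<sigma> e D0 \<Longrightarrow> norm (D - D0) \<le> C * \<sigma>"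
  have "min \<sigma>1 (1 / (\<bar>C\<bar> + 1)) > 0" using \<sigma>1 by (simp add: add_nonneg_pos)
  from eventually_at_right_below[OF this] have "\<forall>\<^sub>F \<sigma> in at_right 0. \<forall>\<omega>\<in>W.
     (\<forall>D'. obj \<sigma> (e \<omega>) (Dh \<sigma> \<omega>) \<le> obj \<sigma> (e \<omega>) D') \<and> norm (err \<sigma> \<omega>) \<le> C * \<sigma>"
  proof eventually_elim
    case (elim \<sigma>)
    show ?case
    proof
      fix \<omega> assume w: "\<omega> \<in> W"
      have eb: "\<forall>b\<in>B. norm (e \<omega> b) \<le> K" using eK w by auto
      have "C * \<sigma> \<le> \<bar>C\<bar> * \<sigma>" using elim by (intro mult_right_mono) auto
      also have "\<dots> \<le> \<sigma> * (\<bar>C\<bar> + 1)" using elim by (simp add: algebra_simps)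
      also have "\<dots> < 1" using elim by (simp add: field_simps)
      finally have small: "C * \<sigma> \<le> 1" by simp
      have "norm (D - D0) \<le> 1" if "obj \<sigma> (e \<omega>) D \<le> obj \<sigma> (e \<omega>) D0" for D
      proof -
        have "norm (D - D0) \<le> C * \<sigma>" using cons[of \<sigma> "e \<omega>" D] elim eb that by auto
        thus ?thesis using small by linarith
      qed
      hence "\<exists>D. \<forall>D'. obj \<sigma> (e \<omega>) D \<le> obj \<sigma> (e \<omega>) D'" by (rule minimiser_exists)
      hence m: "\<forall>D'. obj \<sigma> (e \<omega>) (Dh \<sigma> \<omega>) \<le> obj \<sigma> (e \<omega>) D'" using Dh_min elim w by auto
      thus "(\<forall>D'. obj \<sigma> (e \<omega>) (Dh \<sigma> \<omega>) \<le> obj \<sigma> (e \<omega>) D') \<and> norm (err \<sigma> \<omega>) \<le> C * \<sigma>"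
        unfolding err_def using cons[of \<sigma> "e \<omega>" "Dh \<sigma> \<omega>"] elim eb by auto
    qed
  qed
  thus ?thesis by (rule that)
qed

lemma Dh_eventually_minimiser:
  "\<forall>\<^sub>F \<sigma> in at_right 0. \<forall>\<omega>\<in>W. \<forall>D'. obj \<sigma> (e \<omega>) (Dh \<sigma> \<omega>) \<le> obj \<sigma> (e \<omega>) D'"
proof (rule Dh_minimiser_and_rate)
  fix C assume "\<forall>\<^sub>F \<sigma> in at_right 0. \<forall>\<omega>\<in>W.
     (\<forall>D'. obj \<sigma> (e \<omega>) (Dh \<sigma> \<omega>) \<le> obj \<sigma> (e \<omega>) D') \<and> norm (err \<sigma> \<omega>) \<le> C * \<sigma>"
  thus ?thesis by eventually_elim auto
qed

lemma err_O1: "uniform_O W err 1"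
proof (rule Dh_minimiser_and_rate)
  fix C assume "\<forall>\<^sub>F \<sigma> in at_right 0. \<forall>\<omega>\<in>W.
     (\<forall>D'. obj \<sigma> (e \<omega>) (Dh \<sigma> \<omega>) \<le> obj \<sigma> (e \<omega>) D') \<and> norm (err \<sigma> \<omega>) \<le> C * \<sigma>"
  hence "\<forall>\<^sub>F \<sigma> in at_right 0. \<forall>\<omega>\<in>W. norm (err \<sigma> \<omega>) \<le> C * \<sigma>^1" by eventually_elim auto
  thus ?thesis by (rule uniform_OI)
qed

lemma proj_O1: "uniform_O W (proj b) 1"
  unfolding proj_def[abs_def] by (rule uniform_O_linear[OF bounded_linear_inner_right err_O1])

lemma sdev_O1: "b \<in> B \<Longrightarrow> uniform_O W (sdev b) 1"
proof (rule uniform_OI[of _ _ K])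
  assume b: "b \<in> B"
  show "\<forall>\<^sub>F \<sigma> in at_right 0. \<forall>\<omega>\<in>W. norm (sdev b \<sigma> \<omega>) \<le> K * \<sigma>^1"
    using eventually_at_right_less[of 0]
  proof eventually_elim
    case (elim \<sigma>)
    show ?case
    proof
      fix \<omega> assume w: "\<omega> \<in> W"
      have "\<bar>sdev b \<sigma> \<omega>\<bar> \<le> \<bar>\<sigma>\<bar> * norm (e \<omega> b)"
        unfolding sdev_def using Sobs_deviation[of u b S0 D0 \<sigma> "e \<omega>"] unorm b S0pos by auto
      also have "\<dots> \<le> \<sigma> * K" using elim eK w b by (auto intro: mult_left_mono)
      finally show "norm (sdev b \<sigma> \<omega>) \<le> K * \<sigma>^1" by (simp add: algebra_simps)
    qed
  qed
qed

lemma noise_norm_O0: "b \<in> B \<Longrightarrow> uniform_O W (\<lambda>\<sigma> \<omega>. norm (e \<omega> b)) 0"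
  by (rule uniform_O_const[of W _ K]) (use eK in auto)

lemma phase_O0: "b \<in> B \<Longrightarrow> uniform_O W (\<lambda>\<sigma> \<omega>. phase b \<omega>) 0"
proof (rule uniform_O_const[of W _ K], intro ballI)
  fix \<omega> assume b: "b \<in> B" and w: "\<omega> \<in> W"
  have "\<bar>u b \<bullet> e \<omega> b\<bar> \<le> norm (u b) * norm (e \<omega> b)" by (rule Cauchy_Schwarz_ineq2)
  moreover have "norm (e \<omega> b) \<le> K" using eK b w by auto
  ultimately show "norm (phase b \<omega>) \<le> K" using unorm b by (auto simp: phase_def)
qed

lemma d1_O0: "uniform_O W (\<lambda>\<sigma> \<omega>. d1 \<omega>) 0"
proof -
  have "uniform_O W (\<lambda>\<sigma> \<omega>. \<Sum>b\<in>B. phase b \<omega> *\<^sub>R (Sb b *\<^sub>R xvec b)) 0"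
    by (rule uniform_O_combination[OF fin phase_O0])
  hence "uniform_O W (\<lambda>\<sigma> \<omega>. - (matrix_inv MM *v (\<Sum>b\<in>B. phase b \<omega> *\<^sub>R (Sb b *\<^sub>R xvec b)))) 0"
    by (intro uniform_O_neg uniform_O_linear[OF matrix_vector_mul_bounded_linear])
  thus ?thesis by (rule uniform_O_eq) (simp add: d1_def D1NL_def phase_def mult.commute)
qed

lemma proj_d1_O0: "uniform_O W (\<lambda>\<sigma> \<omega>. proj_d1 b \<omega>) 0"
  unfolding proj_d1_def by (rule uniform_O_linear[OF bounded_linear_inner_right d1_O0])

lemma exp_rem_O3: "uniform_O W (exp_rem b) 3"
proof (rule uniform_O_cube[OF proj_O1])
  show "\<forall>\<^sub>F \<sigma> in at_right 0. \<forall>\<omega>\<in>W. norm (exp_rem b \<sigma> \<omega>) \<le> norm (proj b \<sigma> \<omega>)^3"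
    using uniform_O_eventually_le_1[OF proj_O1[of b]]
    by eventually_elim (auto simp: exp_rem_def expq_def intro: exp_taylor2_bound)
qed

lemma expq_O2: "uniform_O W (expq b) 2"
proof -
  have "uniform_O W (\<lambda>\<sigma> \<omega>. (1/2) *\<^sub>R (proj b \<sigma> \<omega> * proj b \<sigma> \<omega>) + exp_rem b \<sigma> \<omega>) 2"
    by (intro uniform_O_add uniform_O_scale uniform_O_times[OF proj_O1 proj_O1]
        uniform_O_mono[OF exp_rem_O3]) auto
  thus ?thesis by (rule uniform_O_eq) (simp add: exp_rem_def power2_eq_square)
qed

lemma cubic_err_O3: "b \<in> B \<Longrightarrow> uniform_O W (cubic_err b) 3"
proof -
  assume b: "b \<in> B"
  have "uniform_O W (\<lambda>\<sigma> \<omega>. Sb b *\<^sub>R ((2 * Sb b) *\<^sub>R (proj b \<sigma> \<omega> * expq b \<sigma> \<omega>)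
      + expq b \<sigma> \<omega> * sdev b \<sigma> \<omega> - Sb b *\<^sub>R (expq b \<sigma> \<omega> * expq b \<sigma> \<omega>))
      - (Sb b)^2 *\<^sub>R exp_rem b \<sigma> \<omega>) 3"
    by (intro uniform_O_diff uniform_O_add uniform_O_scale uniform_O_times[OF proj_O1 expq_O2]
        uniform_O_times[OF expq_O2 sdev_O1[OF b]] uniform_O_times[OF expq_O2 expq_O2] exp_rem_O3) auto
  thus ?thesis by (rule uniform_O_eq) (simp add: cubic_err_def power2_eq_square algebra_simps)
qed

lemma sdev_first_order: "b \<in> B \<Longrightarrow> uniform_O W (\<lambda>\<sigma> \<omega>. sdev b \<sigma> \<omega> - \<sigma> * phase b \<omega>) 2"
proof -
  assume b: "b \<in> B"
  have s2: "uniform_O W (\<lambda>\<sigma> \<omega>. \<sigma> * \<sigma>) 2"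
    by (rule uniform_O_times[OF uniform_O_sigma uniform_O_sigma]) simp
  have n2: "uniform_O W (\<lambda>\<sigma> \<omega>. norm (e \<omega> b) * norm (e \<omega> b)) 0"
    by (rule uniform_O_times[OF noise_norm_O0[OF b] noise_norm_O0[OF b]]) simp
  have "uniform_O W (\<lambda>\<sigma> \<omega>. (1 / (2 * Sb b)) *\<^sub>R ((\<sigma> * \<sigma>) * (norm (e \<omega> b) * norm (e \<omega> b))
                                  - sdev b \<sigma> \<omega> * sdev b \<sigma> \<omega>)) 2"
    by (intro uniform_O_scale uniform_O_diff uniform_O_times[OF s2 n2]
        uniform_O_times[OF sdev_O1[OF b] sdev_O1[OF b]]) auto
  thus ?thesis by (rule uniform_O_eq) (simp add: sdev_first_order_identity[OF b] power2_eq_square)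
qed

lemma sdev_second_order:
  "b \<in> B \<Longrightarrow> uniform_O W (\<lambda>\<sigma> \<omega>. sdev b \<sigma> \<omega> - \<sigma> * phase b \<omega> - \<sigma>^2 * bias b \<omega>) 3"
proof -
  assume b: "b \<in> B"
  have "uniform_O W (\<lambda>\<sigma> \<omega>. \<sigma> * phase b \<omega>) 1"
    by (rule uniform_O_times[OF uniform_O_sigma phase_O0[OF b]]) simp
  hence "uniform_O W (\<lambda>\<sigma> \<omega>. (sdev b \<sigma> \<omega> - \<sigma> * phase b \<omega>) * (sdev b \<sigma> \<omega> + \<sigma> * phase b \<omega>)) 3"
    by (rule uniform_O_times[OF sdev_first_order[OF b] uniform_O_add[OF sdev_O1[OF b]]]) simp
  hence "uniform_O W (\<lambda>\<sigma> \<omega>. (- 1 / (2 * Sb b)) *\<^sub>R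
           ((sdev b \<sigma> \<omega> - \<sigma> * phase b \<omega>) * (sdev b \<sigma> \<omega> + \<sigma> * phase b \<omega>))) 3"
    by (rule uniform_O_scale)
  thus ?thesis by (rule uniform_O_eq) (simp add: sdev_second_order_identity[OF b])
qed

lemma resid_O2: "b \<in> B \<Longrightarrow> uniform_O W (resid b) 2"
proof -
  assume b: "b \<in> B"
  have "uniform_O W (\<lambda>\<sigma> \<omega>. (- Sb b) *\<^sub>R (sdev b \<sigma> \<omega> - \<sigma> * phase b \<omega>)
      + (3/2 * (Sb b)^2) *\<^sub>R (proj b \<sigma> \<omega> * proj b \<sigma> \<omega>)
      + Sb b *\<^sub>R (proj b \<sigma> \<omega> * sdev b \<sigma> \<omega>) - cubic_err b \<sigma> \<omega>) 2"
    by (intro sdev_first_order[OF b] uniform_O_mono[OF cubic_err_O3[OF b]] uniform_O_diff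
        uniform_O_add uniform_O_scale uniform_O_times[OF proj_O1 proj_O1]
        uniform_O_times[OF proj_O1 sdev_O1[OF b]]) auto
  thus ?thesis by (rule uniform_O_eq) (simp add: resid_def power2_eq_square algebra_simps)
qed

lemma resid_second_order:
  assumes b: "b \<in> B" and proj_first_order: "uniform_O W (\<lambda>\<sigma> \<omega>. proj b \<sigma> \<omega> - \<sigma> * proj_d1 b \<omega>) 2"
  shows "uniform_O W (\<lambda>\<sigma> \<omega>. resid b \<sigma> \<omega> - \<sigma>^2 * d2_coef b \<omega>) 3"
proof -
  have sz: "uniform_O W (\<lambda>\<sigma> \<omega>. \<sigma> * proj_d1 b \<omega>) 1"
    by (rule uniform_O_times[OF uniform_O_sigma proj_d1_O0]) simp
  have "uniform_O W (\<lambda>\<sigma> \<omega>. (- Sb b) *\<^sub>R (sdev b \<sigma> \<omega> - \<sigma> * phase b \<omega> - \<sigma>^2 * bias b \<omega>)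
     + (3/2 * (Sb b)^2) *\<^sub>R ((proj b \<sigma> \<omega> - \<sigma> * proj_d1 b \<omega>) * (proj b \<sigma> \<omega> + \<sigma> * proj_d1 b \<omega>))
     + Sb b *\<^sub>R ((proj b \<sigma> \<omega> - \<sigma> * proj_d1 b \<omega>) * sdev b \<sigma> \<omega>
                 + (\<sigma> * proj_d1 b \<omega>) * (sdev b \<sigma> \<omega> - \<sigma> * phase b \<omega>))
     - cubic_err b \<sigma> \<omega>) 3"
    by (intro sdev_second_order[OF b] cubic_err_O3[OF b] uniform_O_diff uniform_O_add uniform_O_scale
        uniform_O_times[OF proj_first_order uniform_O_add[OF proj_O1 sz]]
        uniform_O_times[OF proj_first_order sdev_O1[OF b]]
        uniform_O_times[OF sz sdev_first_order[OF b]]) auto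
  thus ?thesis
    by (rule uniform_O_eq) (simp add: resid_def d2_coef_def power2_eq_square algebra_simps)
qed

lemma uniform_O_by_MM:
  assumes "\<And>b. b \<in> B \<Longrightarrow> uniform_O W (c b) k"
    and "\<forall>\<^sub>F \<sigma> in at_right 0. \<forall>\<omega>\<in>W. MM *v v \<sigma> \<omega> = (\<Sum>b\<in>B. c b \<sigma> \<omega> *\<^sub>R xvec b)"
  shows "uniform_O W v k"
proof -
  have "uniform_O W (\<lambda>\<sigma> \<omega>. \<Sum>b\<in>B. c b \<sigma> \<omega> *\<^sub>R xvec b) k"
    by (rule uniform_O_combination[OF fin assms(1)])
  hence "uniform_O W (\<lambda>\<sigma> \<omega>. MM *v v \<sigma> \<omega>) k"
    by (rule uniform_O_cong) (use assms(2) in \<open>eventually_elim, auto\<close>)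
  hence "uniform_O W (\<lambda>\<sigma> \<omega>. matrix_inv MM *v (MM *v v \<sigma> \<omega>)) k"
    by (rule uniform_O_linear[OF matrix_vector_mul_bounded_linear])
  thus ?thesis by (simp add: matrix_inv_mult(1)[OF MM_invertible])
qed

lemma first_order_expansion: "uniform_O W (\<lambda>\<sigma> \<omega>. err \<sigma> \<omega> - \<sigma> *\<^sub>R d1 \<omega>) 2"
proof (rule uniform_O_by_MM[OF resid_O2])
  show "\<forall>\<^sub>F \<sigma> in at_right 0. \<forall>\<omega>\<in>W.
          MM *v (err \<sigma> \<omega> - \<sigma> *\<^sub>R d1 \<omega>) = (\<Sum>b\<in>B. resid b \<sigma> \<omega> *\<^sub>R xvec b)"
    using Dh_eventually_minimiser
  proof eventually_elim
    case (elim \<sigma>)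
    show ?case
    proof
      fix \<omega> assume "\<omega> \<in> W"
      hence "MM *v (err \<sigma> \<omega> - \<sigma> *\<^sub>R d1 \<omega> - 0 *\<^sub>R d2 \<omega>)
               = (\<Sum>b\<in>B. (resid b \<sigma> \<omega> - 0 * d2_coef b \<omega>) *\<^sub>R xvec b)"
        using elim by (intro residual_equation) auto
      thus "MM *v (err \<sigma> \<omega> - \<sigma> *\<^sub>R d1 \<omega>) = (\<Sum>b\<in>B. resid b \<sigma> \<omega> *\<^sub>R xvec b)" by simp
    qed
  qed
qed

lemma second_order_expansion:
  "uniform_O W (\<lambda>\<sigma> \<omega>. err \<sigma> \<omega> - \<sigma> *\<^sub>R d1 \<omega> - \<sigma>^2 *\<^sub>R d2 \<omega>) 3"
proof (rule uniform_O_by_MM[where c = "\<lambda>b \<sigma> \<omega>. resid b \<sigma> \<omega> - \<sigma>^2 * d2_coef b \<omega>"])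
  fix b assume b: "b \<in> B"
  have "uniform_O W (\<lambda>\<sigma> \<omega>. xvec b \<bullet> (err \<sigma> \<omega> - \<sigma> *\<^sub>R d1 \<omega>)) 2"
    by (rule uniform_O_linear[OF bounded_linear_inner_right first_order_expansion])
  hence "uniform_O W (\<lambda>\<sigma> \<omega>. proj b \<sigma> \<omega> - \<sigma> * proj_d1 b \<omega>) 2"
    by (rule uniform_O_eq) (simp add: proj_def proj_d1_def inner_diff_right)
  thus "uniform_O W (\<lambda>\<sigma> \<omega>. resid b \<sigma> \<omega> - \<sigma>^2 * d2_coef b \<omega>) 3"
    by (rule resid_second_order[OF b])
next
  show "\<forall>\<^sub>F \<sigma> in at_right 0. \<forall>\<omega>\<in>W. MM *v (err \<sigma> \<omega> - \<sigma> *\<^sub>R d1 \<omega> - \<sigma>^2 *\<^sub>R d2 \<omega>)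
          = (\<Sum>b\<in>B. (resid b \<sigma> \<omega> - \<sigma>^2 * d2_coef b \<omega>) *\<^sub>R xvec b)"
    using Dh_eventually_minimiser by eventually_elim (auto intro: residual_equation)
qed

end

section \<open>From uniform bounds to boundedness in probability\<close>

lemma finite_family_tight:
  fixes X :: "'i \<Rightarrow> 'a \<Rightarrow> 'v::real_normed_vector"
  assumes P: "prob_space M" and fin: "finite B"
    and meas: "\<And>b. b \<in> B \<Longrightarrow> X b \<in> borel_measurable M" and ep: "ep > 0"
  obtains K where "K \<ge> 0" "{\<omega>\<in>space M. \<forall>b\<in>B. norm (X b \<omega>) \<le> K} \<in> sets M"
    "measure M {\<omega>\<in>space M. \<forall>b\<in>B. norm (X b \<omega>) \<le> K} \<ge> 1 - ep"
proof -
  interpret prob_space M by (rule P)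
  define Ab where "Ab b n = {\<omega>\<in>space M. real n < norm (X b \<omega>)}" for b n
  have Abm: "Ab b n \<in> sets M" if "b \<in> B" for b n
  proof -
    have [measurable]: "X b \<in> borel_measurable M" using meas that .
    show ?thesis unfolding Ab_def by measurable
  qed
  define \<eta> where "\<eta> = ep / (real (card B) + 1)"
  have eta: "\<eta> > 0" using ep by (simp add: \<eta>_def)
  (* the tails Ab b n decrease to the empty set, so their probabilities tend to 0 *)
  have "\<forall>\<^sub>F n in sequentially. measure M (Ab b n) < \<eta>" if b: "b \<in> B" for b
  proof -
    have "\<omega> \<notin> Ab b (nat \<lceil>norm (X b \<omega>)\<rceil>)" for \<omega>
    proof
      assume "\<omega> \<in> Ab b (nat \<lceil>norm (X b \<omega>)\<rceil>)"
      hence "real (nat \<lceil>norm (X b \<omega>)\<rceil>) < norm (X b \<omega>)" unfolding Ab_def by blast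
      thus False by linarith
    qed
    hence "(\<Inter>n. Ab b n) = {}" by blast
    moreover have "(\<lambda>n. measure M (Ab b n)) \<longlonglongrightarrow> measure M (\<Inter>n. Ab b n)"
      by (rule Lim_measure_decseq) (use Abm[OF b] in \<open>auto simp: decseq_def Ab_def\<close>)
    ultimately show ?thesis using eta by (auto intro: order_tendstoD)
  qed
  hence "\<forall>\<^sub>F n in sequentially. \<forall>b\<in>B. measure M (Ab b n) < \<eta>"
    using fin by (simp add: eventually_ball_finite)
  then obtain N where N: "\<forall>b\<in>B. measure M (Ab b N) < \<eta>" unfolding eventually_sequentially by blast
  let ?A = "{\<omega>\<in>space M. \<forall>b\<in>B. norm (X b \<omega>) \<le> real N}"
  have Aeq: "?A = space M - (\<Union>b\<in>B. Ab b N)" unfolding Ab_def by (auto simp: not_less)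
  have Um: "(\<Union>b\<in>B. Ab b N) \<in> sets M" using Abm fin by auto
  have "measure M (\<Union>b\<in>B. Ab b N) \<le> (\<Sum>b\<in>B. measure M (Ab b N))"
    by (rule measure_UNION_le[OF fin Abm])
  also have "\<dots> \<le> (\<Sum>b\<in>B. \<eta>)" using N by (intro sum_mono) auto
  also have "\<dots> \<le> ep" unfolding \<eta>_def using ep by (simp add: field_simps)
  finally have A_prob: "measure M ?A \<ge> 1 - ep" unfolding Aeq using prob_compl[OF Um] by simp
  have A_sets: "?A \<in> sets M" unfolding Aeq using Um by auto
  show ?thesis by (rule that[OF _ A_sets A_prob]) simp
qed

lemma bounded_in_prob_from_uniform_O:
  assumes "\<And>ep. ep > 0 \<Longrightarrow> \<exists>A\<in>sets M. measure M A \<ge> 1 - ep \<and> uniform_O A R k"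
  shows "bounded_in_prob_at0 M (\<lambda>\<sigma> \<omega>. (1 / \<sigma>^k) *\<^sub>R R \<sigma> \<omega>)"
  unfolding bounded_in_prob_at0_def
proof (intro allI impI)
  fix ep :: real assume "ep > 0"
  then obtain A C where A: "A \<in> sets M" "measure M A \<ge> 1 - ep"
    and C: "\<forall>\<^sub>F \<sigma> in at_right 0. \<forall>\<omega>\<in>A. norm (R \<sigma> \<omega>) \<le> C * \<sigma>^k"
    using assms unfolding uniform_O_def by blast
  from C eventually_at_right_less[of 0] have "\<forall>\<^sub>F \<sigma> in at_right 0.
      \<exists>A\<in>sets M. measure M A \<ge> 1 - ep \<and> (\<forall>\<omega>\<in>A. norm ((1 / \<sigma>^k) *\<^sub>R R \<sigma> \<omega>) \<le> C)"
  proof eventually_elim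
    case (elim \<sigma>)
    have "norm ((1 / \<sigma>^k) *\<^sub>R R \<sigma> \<omega>) \<le> C" if "\<omega> \<in> A" for \<omega>
    proof -
      have "norm ((1 / \<sigma>^k) *\<^sub>R R \<sigma> \<omega>) = norm (R \<sigma> \<omega>) / \<sigma>^k" using elim by simp
      also have "\<dots> \<le> C" using elim that by (simp add: divide_le_eq)
      finally show ?thesis .
    qed
    thus ?case using A by blast
  qed
  thus "\<exists>K. \<forall>\<^sub>F \<sigma> in at_right 0.
      \<exists>A\<in>sets M. measure M A \<ge> 1 - ep \<and> (\<forall>\<omega>\<in>A. norm ((1 / \<sigma>^k) *\<^sub>R R \<sigma> \<omega>) \<le> K)"
    by blast
qed

theorem proposition4:
  fixes M :: "'a measure"
    and B :: "(real^3) set"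
    and S0 :: real
    and D0 :: "real^6"
    and u :: "real^3 \<Rightarrow> real^2"
    and \<epsilon> :: "real^3 \<Rightarrow> 'a \<Rightarrow> real^2"
    and Dhat :: "real \<Rightarrow> 'a \<Rightarrow> real^6"
  assumes "prob_space M"
    and "finite B"
    and "\<forall>b\<in>B. norm b = 1"
    and "S0 > 0"
    and "invertible (\<Sum>b\<in>B. outer_prod (xvec b) (xvec b))"
    and "\<forall>b\<in>B. norm (u b) = 1"
    and "prob_space.indep_vars M (\<lambda>_. borel) \<epsilon> B"
    and "\<forall>b\<in>B. distributed M lborel (\<epsilon> b) (\<lambda>x. std_normal_density (x$1) * std_normal_density (x$2))"
    and "\<forall>\<sigma>>0. \<forall>\<omega>\<in>space M.
           (\<exists>D. \<forall>D'. NLobj B S0 D0 u \<sigma> (\<lambda>b. \<epsilon> b \<omega>) D \<le> NLobj B S0 D0 u \<sigma> (\<lambda>b. \<epsilon> b \<omega>) D') \<longrightarrow>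
           (\<forall>D'. NLobj B S0 D0 u \<sigma> (\<lambda>b. \<epsilon> b \<omega>) (Dhat \<sigma> \<omega>) \<le> NLobj B S0 D0 u \<sigma> (\<lambda>b. \<epsilon> b \<omega>) D')"
  shows "bounded_in_prob_at0 M
           (\<lambda>\<sigma> \<omega>. (1 / \<sigma>^3) *\<^sub>R
              (Dhat \<sigma> \<omega> - D0 - \<sigma> *\<^sub>R D1NL B S0 D0 u (\<lambda>b. \<epsilon> b \<omega>)
                 - \<sigma>^2 *\<^sub>R D2NL B S0 D0 u (\<lambda>b. \<epsilon> b \<omega>)))"
proof (rule bounded_in_prob_from_uniform_O)
  fix ep :: real assume "ep > 0"
  have meas: "\<epsilon> b \<in> borel_measurable M" if "b \<in> B" for b
    using distributed_measurable[of M lborel "\<epsilon> b"] assms(8) that by auto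
  show "\<exists>A\<in>sets M. measure M A \<ge> 1 - ep \<and> uniform_O A (\<lambda>\<sigma> \<omega>. Dhat \<sigma> \<omega> - D0
          - \<sigma> *\<^sub>R D1NL B S0 D0 u (\<lambda>b. \<epsilon> b \<omega>) - \<sigma>^2 *\<^sub>R D2NL B S0 D0 u (\<lambda>b. \<epsilon> b \<omega>)) 3"
  proof (rule finite_family_tight[OF assms(1,2) meas \<open>ep > 0\<close>])
    fix K assume K: "K \<ge> 0" and A: "{\<omega>\<in>space M. \<forall>b\<in>B. norm (\<epsilon> b \<omega>) \<le> K} \<in> sets M"
      "measure M {\<omega>\<in>space M. \<forall>b\<in>B. norm (\<epsilon> b \<omega>) \<le> K} \<ge> 1 - ep"
    interpret bounded_noise B S0 D0 u "{\<omega>\<in>space M. \<forall>b\<in>B. norm (\<epsilon> b \<omega>) \<le> K}" "\<lambda>\<omega> b. \<epsilon> b \<omega>" K Dhat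
      by unfold_locales (use assms(2,4,5,6,9) K in auto)
    show ?thesis using A second_order_expansion unfolding err_def d1_def d2_def by blast
  qed
qed

end
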